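(* Let $F$ be an algebraically closed field with $\mathrm{char}\,F=2$. Then the maximal Mathieu subspaces of $M_2(F)$ are exactly the following: (i) the $2$-dimensional subspaces $V\subseteq I_2^\perp=\{b\in M_2(F):\mathrm{Tr}(b)=0\}$ with $I_2\notin V$; (ii) the subspaces $F(\lambda_1e_1+\lambda_2e_2)+e_1M_2(F)e_2$, where $e_1,e_2$ are nonzero idempotents with $e_1+e_2=I_2$ and $\lambda_1,\lambda_2\in F$ are distinct, nonzero, with $\lambda_1+\lambda_2\ne0$.
   Context: Let $\mathcal A$ be an associative algebra over a field $F$. An $F$-subspace $M\subseteq\mathcal A$ is a Mathieu subspace (MS) of $\mathcal A$ if for all $a,b,c\in\mathcal A$ such that $a^m\in M$ for all $m\ge 1$, there exists $N$ (depending on $a,b,c$) such that $ba^mc\in M$ for all $m\ge N$. A maximal MS of $\mathcal A$ is a proper MS of $\mathcal A$ that is not properly contained in any proper MS of $\mathcal A$. *)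

theory Defs
  imports "HOL-Analysis.Analysis" "HOL-Computational_Algebra.Polynomial"
begin

definition msmult :: "'a::field \<Rightarrow> 'a^2^2 \<Rightarrow> 'a^2^2" where
  "msmult c A = (\<chi> i j. c * A $ i $ j)"

lemma vector_space_msmult: "vector_space (msmult :: 'a::field \<Rightarrow> 'a^2^2 \<Rightarrow> 'a^2^2)"
  by unfold_locales (simp_all add: msmult_def vec_eq_iff algebra_simps)

text \<open>Matrix powers (the componentwise power on vec types is NOT the matrix power).\<close>
primrec mpow :: "'a::field^2^2 \<Rightarrow> nat \<Rightarrow> 'a^2^2" where
  "mpow a 0 = mat 1"
| "mpow a (Suc m) = mpow a m ** a"

definition F_subspace :: "('a::field^2^2) set \<Rightarrow> bool" where
  "F_subspace M \<longleftrightarrow> module.subspace msmult M"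

definition Mathieu_subspace :: "('a::field^2^2) set \<Rightarrow> bool" where
  "Mathieu_subspace M \<longleftrightarrow> F_subspace M \<and>
     (\<forall>a b c. (\<forall>m\<ge>1. mpow a m \<in> M) \<longrightarrow> (\<exists>N. \<forall>m\<ge>N. b ** mpow a m ** c \<in> M))"

definition maximal_Mathieu_subspace :: "('a::field^2^2) set \<Rightarrow> bool" where
  "maximal_Mathieu_subspace M \<longleftrightarrow> Mathieu_subspace M \<and> M \<noteq> UNIV \<and>
     (\<forall>M'. Mathieu_subspace M' \<and> M' \<noteq> UNIV \<and> M \<subseteq> M' \<longrightarrow> M' = M)"

definition idempotent_mat :: "'a::field^2^2 \<Rightarrow> bool" where
  "idempotent_mat e \<longleftrightarrow> e ** e = e"

end

theory Submission
  imports Defs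
begin

text \<open>A proper subspace \<open>M\<close> of \<open>M\<^sub>2(F)\<close> is Mathieu iff it contains no nonzero idempotent:
  a nonzero idempotent \<open>e \<in> M\<close> would put every \<open>b e c\<close>, hence everything, into \<open>M\<close>; conversely,
  if \<open>a\<close> and \<open>a\<^sup>2\<close> lie in an idempotent-free \<open>M\<close>, Cayley--Hamilton forces \<open>a\<^sup>2 = 0\<close>.
  Apart from \<open>0\<close> and \<open>I\<close>, the idempotents are the matrices of trace \<open>1\<close> and determinant \<open>0\<close>,
  so one has to control the zeros of \<open>det\<close> on the trace-one part \<open>x + V\<close> of \<open>M\<close>, where \<open>V\<close> is
  the trace-zero part. Over an algebraically closed field of characteristic \<open>2\<close> this quadratic
  function has a zero as soon as \<open>dim V \<ge> 2\<close>, so idempotent-free subspaces have dimension at most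
  \<open>2\<close>; those of smaller dimension can be enlarged, hence the maximal ones are exactly the
  idempotent-free planes. A plane inside \<open>sl\<^sub>2\<close> is of type (i). Otherwise it is spanned by some
  \<open>x\<close> of trace \<open>1\<close> and a nilpotent \<open>n\<close> with \<open>det (x + s n) = det x \<noteq> 0\<close> for all \<open>s\<close>; in
  characteristic \<open>2\<close> the eigenvalues \<open>\<lambda>\<^sub>1, \<lambda>\<^sub>1 + 1\<close> of \<open>x\<close> are distinct, and \<open>n\<close> lies in the
  corner \<open>e\<^sub>1 M\<^sub>2(F) e\<^sub>2\<close> of the spectral idempotents of \<open>x\<close> (after possibly swapping them),
  which is type (ii).\<close>

section \<open>Coordinates and the algebra of \<open>2\<times>2\<close> matrices\<close>

definition mat2 :: "'a::field \<Rightarrow> 'a \<Rightarrow> 'a \<Rightarrow> 'a \<Rightarrow> 'a^2^2" where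
  "mat2 a b c d = (\<chi> i j. if i = 1 then (if j = 1 then a else b) else (if j = 1 then c else d))"

lemma mat2_nth [simp]:
  "mat2 a b c d $ 1 $ 1 = a" "mat2 a b c d $ 1 $ 2 = b"
  "mat2 a b c d $ 2 $ 1 = c" "mat2 a b c d $ 2 $ 2 = d"
  by (simp_all add: mat2_def)

lemma mat2_cases: obtains a b c d where "A = mat2 a b c d"
proof
  show "A = mat2 (A$1$1) (A$1$2) (A$2$1) (A$2$2)"
    by (simp add: vec_eq_iff forall_2)
qed

lemma mat2_eq_iff [simp]:
  "mat2 a b c d = mat2 a' b' c' d' \<longleftrightarrow> a = a' \<and> b = b' \<and> c = c' \<and> d = d'"
  by (simp add: vec_eq_iff forall_2)

lemma mat2_mult [simp]:
  "mat2 a b c d ** mat2 a' b' c' d' =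
     mat2 (a*a' + b*c') (a*b' + b*d') (c*a' + d*c') (c*b' + d*d')"
  by (simp add: vec_eq_iff forall_2 matrix_matrix_mult_def sum_2)

lemma mat2_add [simp]: "mat2 a b c d + mat2 a' b' c' d' = mat2 (a+a') (b+b') (c+c') (d+d')"
  by (simp add: vec_eq_iff forall_2)

lemma mat2_diff [simp]: "mat2 a b c d - mat2 a' b' c' d' = mat2 (a-a') (b-b') (c-c') (d-d')"
  by (simp add: vec_eq_iff forall_2)

lemma msmult_mat2 [simp]: "msmult k (mat2 a b c d) = mat2 (k*a) (k*b) (k*c) (k*d)"
  by (simp add: vec_eq_iff forall_2 msmult_def)

lemma zero_eq_mat2: "(0::'a::field^2^2) = mat2 0 0 0 0"
  by (simp add: vec_eq_iff forall_2)

lemma mat1_eq_mat2: "(mat 1::'a::field^2^2) = mat2 1 0 0 1"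
  by (simp add: vec_eq_iff forall_2 mat_def)

lemma trace_mat2 [simp]: "trace (mat2 a b c d) = a + d"
  by (simp add: trace_def sum_2)

lemma det_mat2 [simp]: "det (mat2 a b c d) = a * d - b * c"
  by (simp add: det_2)

lemma msmult_msmult: "msmult c (msmult d A) = msmult (c * d) A"
  by (cases A rule: mat2_cases) (simp add: algebra_simps)

lemma msmult_add_right: "msmult c (A + B) = msmult c A + msmult c B"
  by (cases A rule: mat2_cases; cases B rule: mat2_cases) (simp add: algebra_simps)

lemma msmult_add_left: "msmult (c + d) A = msmult c A + msmult d A"
  by (cases A rule: mat2_cases) (simp add: algebra_simps)

lemma msmult_one [simp]: "msmult 1 A = A"
  by (cases A rule: mat2_cases) simp

lemma msmult_zero_left [simp]: "msmult 0 A = 0"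
  by (cases A rule: mat2_cases) (simp add: zero_eq_mat2)

lemma msmult_zero_right [simp]: "msmult c 0 = 0"
  by (simp add: zero_eq_mat2)

lemma matrix_mult_msmult_left: "msmult c A ** B = msmult c (A ** B)"
  by (cases A rule: mat2_cases; cases B rule: mat2_cases) (simp add: algebra_simps)

lemma matrix_mult_msmult_right: "A ** msmult c B = msmult c (A ** B)"
  by (cases A rule: mat2_cases; cases B rule: mat2_cases) (simp add: algebra_simps)

lemma matrix_add_rdistrib: "((A::'a::field^2^2) + B) ** (C::'a^2^2) = A ** C + B ** C"
  by (cases A rule: mat2_cases; cases B rule: mat2_cases; cases C rule: mat2_cases)
    (simp add: algebra_simps)

lemma matrix_diff_ldistrib: "(C::'a::field^2^2) ** (A - B::'a^2^2) = C ** A - C ** B"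
  by (cases A rule: mat2_cases; cases B rule: mat2_cases; cases C rule: mat2_cases)
    (simp add: algebra_simps)

lemma matrix_diff_rdistrib: "((A::'a::field^2^2) - B) ** (C::'a^2^2) = A ** C - B ** C"
  by (cases A rule: mat2_cases; cases B rule: mat2_cases; cases C rule: mat2_cases)
    (simp add: algebra_simps)

lemma trace_zero [simp]: "trace (0::'a::field^2^2) = 0"
  by (simp add: zero_eq_mat2)

lemma trace_msmult [simp]: "trace (msmult c A) = c * trace A"
  by (cases A rule: mat2_cases) (simp add: algebra_simps)

lemma det_msmult [simp]: "det (msmult c A) = c^2 * det A"
  by (cases A rule: mat2_cases) (simp add: algebra_simps power2_eq_square)

lemma mat1_neq_zero: "(mat 1 :: 'a::field^2^2) \<noteq> 0"
  by (simp add: mat1_eq_mat2 zero_eq_mat2)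

lemma matrix_square_eq_Cayley_Hamilton:
  "(A::'a::field^2^2) ** A = msmult (trace A) A - msmult (det A) (mat 1)"
  by (cases A rule: mat2_cases) (simp add: mat1_eq_mat2 algebra_simps)

lemma matrix_sandwich_eq:
  "(X::'a::field^2^2) ** Y ** X = msmult (trace (X ** Y)) X - msmult (det X) (msmult (trace Y) (mat 1) - Y)"
  by (cases X rule: mat2_cases; cases Y rule: mat2_cases) (simp add: mat1_eq_mat2 algebra_simps)

definition det_polar :: "'a::field^2^2 \<Rightarrow> 'a^2^2 \<Rightarrow> 'a" where
  "det_polar A B = trace A * trace B - trace (A ** B)"

lemma det_add: "det (A + B) = det A + det B + det_polar A B"
  by (cases A rule: mat2_cases; cases B rule: mat2_cases) (simp add: det_polar_def algebra_simps)

lemma det_polar_msmult_left: "det_polar (msmult c A) B = c * det_polar A B"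
  by (simp add: det_polar_def matrix_mult_msmult_left algebra_simps)

lemma det_polar_msmult_right: "det_polar A (msmult c B) = c * det_polar A B"
  by (simp add: det_polar_def matrix_mult_msmult_right algebra_simps)

lemma det_polar_add_left: "det_polar (A + B) C = det_polar A C + det_polar B C"
  by (simp add: det_polar_def matrix_add_rdistrib trace_add algebra_simps)

lemma det_add_msmult: "det (x + msmult s u) = det x + s * det_polar x u + s^2 * det u"
  by (simp add: det_add det_polar_msmult_right)

lemma det_msmult_add_msmult:
  "det (msmult a x + msmult b v) = a^2 * det x + a * b * det_polar x v + b^2 * det v"
  by (simp add: det_add det_polar_msmult_left det_polar_msmult_right algebra_simps)

lemma det_add_msmult_msmult:
  "det (x + msmult s u + msmult t v) =
     det x + s * det_polar x u + t * det_polar x v + s^2 * det u + s * t * det_polar u v + t^2 * det v"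
  by (simp only: det_add det_polar_add_left det_polar_msmult_left det_polar_msmult_right det_msmult)
    (simp add: algebra_simps)

definition unit_mat :: "2 \<Rightarrow> 2 \<Rightarrow> 'a::field^2^2" where
  "unit_mat i j = (\<chi> r s. if r = i \<and> s = j then 1 else 0)"

lemma unit_mat_mat2:
  "unit_mat 1 1 = mat2 1 0 0 0" "unit_mat 1 2 = mat2 0 1 0 0"
  "unit_mat 2 1 = mat2 0 0 1 0" "unit_mat 2 2 = mat2 (0::'a::field) 0 0 1"
  by (simp_all add: vec_eq_iff unit_mat_def forall_2)

lemma unit_mat_sandwich: "unit_mat i k ** A ** unit_mat l j = msmult (A$k$l) (unit_mat i j)"
  using exhaust_2[of i] exhaust_2[of j] exhaust_2[of k] exhaust_2[of l]
  by (elim disjE)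
    (simp_all add: vec_eq_iff unit_mat_def matrix_matrix_mult_def msmult_def sum_2 forall_2)

lemma sandwich_unit_mat_nth: "(A ** unit_mat k l ** B) $ i $ j = A$i$k * B$l$j"
  using exhaust_2[of k] exhaust_2[of l]
  by (elim disjE) (simp_all add: matrix_matrix_mult_def sum_2 unit_mat_def)

definition matrix_units :: "('a::field^2^2) set" where
  "matrix_units = {unit_mat 1 1, unit_mat 1 2, unit_mat 2 1, unit_mat 2 2}"

interpretation M2: finite_dimensional_vector_space "msmult :: 'a::field \<Rightarrow> 'a^2^2 \<Rightarrow> 'a^2^2"
  matrix_units
proof -
  interpret vector_space "msmult :: 'a \<Rightarrow> 'a^2^2 \<Rightarrow> 'a^2^2"
    by (rule vector_space_msmult)
  show "finite_dimensional_vector_space (msmult :: 'a \<Rightarrow> 'a^2^2 \<Rightarrow> 'a^2^2) matrix_units"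
  proof
    show fin: "finite (matrix_units :: ('a^2^2) set)"
      by (simp add: matrix_units_def)
    show "independent (matrix_units :: ('a^2^2) set)"
    proof (rule independent_if_scalars_zero[OF fin])
      fix f :: "'a^2^2 \<Rightarrow> 'a" and x :: "'a^2^2"
      assume "(\<Sum>x\<in>matrix_units. msmult (f x) x) = 0" and "x \<in> matrix_units"
      then show "f x = 0"
        by (auto simp: matrix_units_def unit_mat_mat2 zero_eq_mat2)
    qed
    show "span (matrix_units :: ('a^2^2) set) = UNIV"
    proof (intro set_eqI iffI UNIV_I)
      fix A :: "'a^2^2"
      obtain a b c d where A: "A = mat2 a b c d" by (rule mat2_cases)
      have "A = msmult a (unit_mat 1 1) + msmult b (unit_mat 1 2)
          + msmult c (unit_mat 2 1) + msmult d (unit_mat 2 2)"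
        by (simp add: A unit_mat_mat2)
      also have "\<dots> \<in> span matrix_units"
        by (intro span_add span_scale span_base) (auto simp: matrix_units_def)
      finally show "A \<in> span matrix_units" .
    qed
  qed
qed

lemma span_pair: "M2.span {u, v} = {msmult a u + msmult b v | a b. True}"
proof -
  have "M2.span {u, v} = {x. \<exists>k. x - msmult k u \<in> M2.span {v}}"
    by (simp add: M2.span_insert)
  also have "\<dots> = {msmult a u + msmult b v | a b. True}"
    apply (auto simp: M2.span_singleton)
    subgoal for x k l by (rule exI[of _ k], rule exI[of _ l]) (metis add.commute diff_add_cancel)
    subgoal for a b by (rule exI[of _ a]) auto
    done
  finally show ?thesis .
qed

lemma idempotent_cases:
  assumes "(z::'a::field^2^2) ** z = z"
  shows "z = 0 \<or> z = mat 1 \<or> (trace z = 1 \<and> det z = 0)"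
proof -
  obtain a b c d where z: "z = mat2 a b c d" by (rule mat2_cases)
  have e: "a*a + b*c = a" "a*b + b*d = b" "c*a + d*c = c" "c*b + d*d = d"
    using assms by (simp_all add: z)
  show ?thesis
  proof (cases "a + d = 1")
    case True
    then have d: "d = 1 - a" by (simp add: algebra_simps)
    have "a * d - b * c = 0"
      using e(1) unfolding d by (simp add: algebra_simps)
    then show ?thesis using True by (simp add: z)
  next
    case False
    have "b * (a + d - 1) = 0" "c * (a + d - 1) = 0"
      using e(2,3) by (simp_all add: algebra_simps)
    then have "b = 0" "c = 0" using False by simp_all
    moreover from this have "a * a = a" "d * d = d" using e by auto
    then have "(a = 0 \<or> a = 1) \<and> (d = 0 \<or> d = 1)"
      by (metis mult_cancel_right2 mult_eq_0_iff)
    ultimately show ?thesis using False by (auto simp: z zero_eq_mat2 mat1_eq_mat2)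
  qed
qed

lemma idempotent_if_trace_det:
  assumes "trace (z::'a::field^2^2) = 1" and "det z = 0"
  shows "z ** z = z"
  using assms by (simp add: matrix_square_eq_Cayley_Hamilton)

section \<open>Mathieu subspaces of \<open>M\<^sub>2(F)\<close>\<close>

lemma mpow_idempotent: "e ** e = e \<Longrightarrow> m \<ge> 1 \<Longrightarrow> mpow e m = e"
proof (induction m)
  case (Suc m)
  then show ?case by (cases m) auto
qed simp

lemma mpow_square_zero: "a ** a = 0 \<Longrightarrow> m \<ge> 2 \<Longrightarrow> mpow a m = 0"
proof (induction m)
  case (Suc m)
  then show ?case by (cases "m = 1") (auto simp: numeral_2_eq_2)
qed simp

lemma subspace_eq_UNIV_if_sandwiches:
  assumes M: "M2.subspace M" and "(e::'a::field^2^2) \<noteq> 0" and sandwiches: "\<And>b c. b ** e ** c \<in> M"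
  shows "M = UNIV"
proof -
  obtain k l where kl: "e$k$l \<noteq> 0" using \<open>e \<noteq> 0\<close> by (auto simp: vec_eq_iff)
  have "unit_mat i j \<in> M" for i j
  proof -
    have "msmult (1 / e$k$l) (unit_mat i k ** e ** unit_mat l j) \<in> M"
      using sandwiches M by (simp add: M2.subspace_scale)
    then show ?thesis using kl by (simp add: unit_mat_sandwich msmult_msmult)
  qed
  then have "M2.span matrix_units \<subseteq> M"
    using M by (intro M2.span_minimal) (auto simp: matrix_units_def)
  then show ?thesis using M2.span_Basis by auto
qed

definition idempotent_free :: "('a::field^2^2) set \<Rightarrow> bool" where
  "idempotent_free M \<longleftrightarrow> (\<forall>e\<in>M. e ** e = e \<longrightarrow> e = 0)"

lemma idempotent_free_mat1_notin: "idempotent_free M \<Longrightarrow> mat 1 \<notin> M"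
  using mat1_neq_zero unfolding idempotent_free_def by fastforce

text \<open>By Cayley--Hamilton, \<open>a\<^sup>2 - trace a \<cdot> a\<close> is a multiple of \<open>I\<close> that lies in \<open>M\<close>, so
  \<open>det a = 0\<close>; then \<open>a / trace a\<close> would be an idempotent unless \<open>trace a = 0\<close>.\<close>
lemma square_zero_if_in_idempotent_free:
  assumes M: "M2.subspace M" and free: "idempotent_free M"
    and a: "(a::'a::field^2^2) \<in> M" and a2: "a ** a \<in> M"
  shows "a ** a = 0"
proof -
  have det: "det a = 0"
  proof (rule ccontr)
    assume "det a \<noteq> 0"
    then have "mat 1 = msmult (- 1 / det a) (a ** a - msmult (trace a) a)"
      by (simp add: matrix_square_eq_Cayley_Hamilton msmult_msmult)
    also have "\<dots> \<in> M"
      using M a a2 by (intro M2.subspace_scale M2.subspace_diff) auto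
    finally show False using idempotent_free_mat1_notin[OF free] by blast
  qed
  have "trace a = 0"
  proof (rule ccontr)
    assume tr: "trace a \<noteq> 0"
    let ?e = "msmult (1 / trace a) a"
    have "?e ** ?e = ?e"
      using tr det by (simp add: idempotent_if_trace_det)
    moreover have "?e \<in> M" using M a by (simp add: M2.subspace_scale)
    ultimately have "?e = 0" using free unfolding idempotent_free_def by blast
    moreover have "trace ?e = 1" using tr by simp
    ultimately show False by (metis trace_zero zero_neq_one)
  qed
  with det show ?thesis by (simp add: matrix_square_eq_Cayley_Hamilton)
qed

lemma proper_Mathieu_subspace_iff_idempotent_free:
  "Mathieu_subspace (M::('a::field^2^2) set) \<and> M \<noteq> UNIV \<longleftrightarrow> M2.subspace M \<and> idempotent_free M"
proof (intro iffI conjI; elim conjE)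
  assume MS: "Mathieu_subspace M" and proper: "M \<noteq> UNIV"
  then show M: "M2.subspace M" by (simp add: Mathieu_subspace_def F_subspace_def)
  show "idempotent_free M" unfolding idempotent_free_def
  proof (intro ballI impI, rule ccontr)
    fix e assume e: "e \<in> M" "e ** e = e" "e \<noteq> 0"
    have "b ** e ** c \<in> M" for b c
    proof -
      have "\<forall>m\<ge>1. mpow e m \<in> M" using e by (simp add: mpow_idempotent)
      then obtain N where "\<forall>m\<ge>N. b ** mpow e m ** c \<in> M"
        using MS unfolding Mathieu_subspace_def by blast
      then have "b ** mpow e (max N 1) ** c \<in> M" by simp
      then show ?thesis using mpow_idempotent[OF e(2)] by simp
    qed
    then show False using subspace_eq_UNIV_if_sandwiches[OF M e(3)] proper by blast
  qed
next
  assume M: "M2.subspace M" and free: "idempotent_free M"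
  show "M \<noteq> UNIV" using idempotent_free_mat1_notin[OF free] by blast
  show "Mathieu_subspace M" unfolding Mathieu_subspace_def F_subspace_def
  proof (intro conjI allI impI M)
    fix a b c :: "'a^2^2"
    assume "\<forall>m\<ge>1. mpow a m \<in> M"
    from this[rule_format, of 1] this[rule_format, of 2]
    have "a ** a = 0"
      by (intro square_zero_if_in_idempotent_free[OF M free]) (simp_all add: numeral_2_eq_2)
    then show "\<exists>N. \<forall>m\<ge>N. b ** mpow a m ** c \<in> M"
      using M2.subspace_0[OF M] by (intro exI[of _ 2]) (simp add: mpow_square_zero)
  qed
qed

lemma maximal_Mathieu_subspace_iff_maximal_idempotent_free:
  "maximal_Mathieu_subspace (M::('a::field^2^2) set) \<longleftrightarrow>
     M2.subspace M \<and> idempotent_free M \<and>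
     (\<forall>M'. M2.subspace M' \<and> idempotent_free M' \<and> M \<subseteq> M' \<longrightarrow> M' = M)"
  unfolding maximal_Mathieu_subspace_def using proper_Mathieu_subspace_iff_idempotent_free by blast

lemma idempotent_free_iff:
  "idempotent_free (M::('a::field^2^2) set) \<longleftrightarrow> mat 1 \<notin> M \<and> (\<forall>z\<in>M. trace z = 1 \<longrightarrow> det z \<noteq> 0)"
proof (intro iffI conjI ballI impI)
  assume free: "idempotent_free M"
  then show "mat 1 \<notin> M" by (rule idempotent_free_mat1_notin)
  fix z assume "z \<in> M" "trace z = 1"
  then show "det z \<noteq> 0"
    using free idempotent_if_trace_det[of z] by (force simp: idempotent_free_def)
next
  assume "mat 1 \<notin> M \<and> (\<forall>z\<in>M. trace z = 1 \<longrightarrow> det z \<noteq> 0)"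
  then show "idempotent_free M"
    unfolding idempotent_free_def using idempotent_cases by blast
qed

lemma idempotent_free_trace_zero:
  assumes "M \<subseteq> {v. trace v = 0}" and "mat 1 \<notin> M"
  shows "idempotent_free M"
  using assms by (auto simp: idempotent_free_iff)

section \<open>Characteristic \<open>2\<close> and quadratic equations\<close>

lemma char2_add_self:
  fixes x :: "'a::ring_1"
  shows "(2::'a) = 0 \<Longrightarrow> x + x = 0"
  by (metis mult_2 mult_zero_left)

lemma char2_uminus:
  fixes x :: "'a::ring_1"
  shows "(2::'a) = 0 \<Longrightarrow> - x = x"
  by (metis char2_add_self neg_eq_iff_add_eq_0)

lemma char2_square_inj:
  assumes "(2::'a::field) = 0" and "x^2 = (y::'a)^2"
  shows "x = y"
proof -
  have "(x - y)^2 = x^2 - y^2 - 2 * (x * y - y^2)"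
    by (simp add: power2_eq_square algebra_simps)
  with assms have "(x - y)^2 = 0" by simp
  then show ?thesis by simp
qed

lemma char2_trace_zero:
  fixes a b c d :: "'a::field"
  assumes "(2::'a) = 0" and "trace (mat2 a b c d) = 0"
  shows "d = a"
  using assms char2_uminus[of a] by (simp add: add_eq_0_iff)

lemma trace_mat1_char2: "(2::'a::field) = 0 \<Longrightarrow> trace (mat 1 :: 'a^2^2) = 0"
  by (simp add: mat1_eq_mat2)

lemma idempotent_free_if_trace_det_proportional:
  fixes M :: "('a::field^2^2) set"
  assumes c2: "(2::'a) = 0" and "t \<noteq> 0" and "\<delta> \<noteq> 0"
    and scaled: "\<And>z. z \<in> M \<Longrightarrow> \<exists>c. trace z = c * t \<and> det z = c^2 * \<delta>"
  shows "idempotent_free M"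
  unfolding idempotent_free_iff
proof (intro conjI ballI impI notI)
  assume "mat 1 \<in> M"
  then obtain c where "trace (mat 1 :: 'a^2^2) = c * t" "det (mat 1 :: 'a^2^2) = c^2 * \<delta>"
    using scaled by blast
  then show False using \<open>t \<noteq> 0\<close> trace_mat1_char2[OF c2] by simp
next
  fix z assume "z \<in> M" "trace z = 1" "det z = 0"
  then obtain c where "trace z = c * t" "det z = c^2 * \<delta>" using scaled by blast
  with \<open>trace z = 1\<close> \<open>det z = 0\<close> \<open>\<delta> \<noteq> 0\<close> show False by simp
qed

lemma quadratic_has_root:
  fixes a b c :: "'a::field"
  assumes alg: "\<forall>p :: 'a poly. degree p \<ge> 1 \<longrightarrow> (\<exists>x. poly p x = 0)"
    and "a \<noteq> 0 \<or> b \<noteq> 0"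
  obtains s where "a * s^2 + b * s + c = 0"
proof (cases "a = 0")
  case True
  with assms(2) have "a * (- c / b)^2 + b * (- c / b) + c = 0" by simp
  then show ?thesis by (rule that)
next
  case False
  then have "degree [:c, b, a:] \<ge> 1" by simp
  with alg obtain s where "poly [:c, b, a:] s = 0" by blast
  then show ?thesis by (intro that[of s]) (simp add: algebra_simps power2_eq_square)
qed

section \<open>Idempotent-free subspaces have dimension at most two\<close>

lemma trace_zero_isotropic_pair_dependent:
  fixes u v :: "'a::field^2^2"
  assumes c2: "(2::'a) = 0" and tr: "trace u = 0" "trace v = 0"
    and det: "det u = 0" "det v = 0" and polar: "det_polar u v = 0" and "u \<noteq> 0"
  obtains k where "v = msmult k u"
proof -
  obtain a b c d where u: "u = mat2 a b c d" by (rule mat2_cases)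
  obtain a' b' c' d' where v: "v = mat2 a' b' c' d'" by (rule mat2_cases)
  have d: "d = a" and d': "d' = a'"
    using tr char2_trace_zero[OF c2] by (simp_all add: u v)
  have sq: "a^2 = b * c" "a'^2 = b' * c'"
    using det by (simp_all add: u v d d' power2_eq_square)
  have "b * c' + c * b' = 2 * (a * a') - det_polar u v"
    by (simp add: det_polar_def u v d d' algebra_simps)
  then have "b * c' = - (c * b')" using c2 polar by (simp add: eq_neg_iff_add_eq_0)
  then have cross: "b * c' = c * b'" using char2_uminus[OF c2] by simp
  show ?thesis
  proof (cases "b = 0")
    case False
    define k where "k = b' / b"
    have b': "b' = k * b" and c': "c' = k * c"
      using False cross by (simp_all add: k_def field_simps)
    have "a'^2 = (k * a)^2" using sq by (simp add: b' c' power2_eq_square algebra_simps)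
    then have "a' = k * a" by (rule char2_square_inj[OF c2])
    then show ?thesis by (intro that[of k]) (simp add: u v d d' b' c')
  next
    case True
    then have "a = 0" and "c \<noteq> 0" using sq \<open>u \<noteq> 0\<close> by (auto simp: u d zero_eq_mat2)
    define k where "k = c' / c"
    have "b' = 0" and "a' = 0" using True cross sq \<open>c \<noteq> 0\<close> by simp_all
    then show ?thesis using \<open>a = 0\<close> True \<open>c \<noteq> 0\<close>
      by (intro that[of k]) (simp add: u v d d' k_def)
  qed
qed

text \<open>The restriction of \<open>det\<close> to the plane \<open>x + Fu + Fv\<close> is a quadratic polynomial in two
  variables; over an algebraically closed field it has a zero unless all its non-constant
  coefficients vanish, and that would make \<open>u\<close> and \<open>v\<close> proportional.\<close>
lemma det_vanishes_on_trace_zero_plane: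
  fixes x u v :: "'a::field^2^2"
  assumes c2: "(2::'a) = 0" and alg: "\<forall>p :: 'a poly. degree p \<ge> 1 \<longrightarrow> (\<exists>x. poly p x = 0)"
    and tr: "trace u = 0" "trace v = 0" and "u \<noteq> 0" and indep: "\<And>k. v \<noteq> msmult k u"
  obtains s t where "det (x + msmult s u + msmult t v) = 0"
proof -
  consider "det u \<noteq> 0 \<or> det_polar x u \<noteq> 0"
    | "det u = 0" "det_polar x u = 0" "det_polar u v \<noteq> 0"
    | "det v \<noteq> 0 \<or> det_polar x v \<noteq> 0"
  proof -
    have "det u \<noteq> 0 \<or> det v \<noteq> 0 \<or> det_polar u v \<noteq> 0"
    proof (rule ccontr)
      assume "\<not> ?thesis"
      then obtain k where "v = msmult k u"
        using trace_zero_isotropic_pair_dependent[OF c2 tr _ _ _ \<open>u \<noteq> 0\<close>] by blast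
      with indep show False by blast
    qed
    then show ?thesis
      using that by (cases "det u \<noteq> 0 \<or> det_polar x u \<noteq> 0") auto
  qed
  then show ?thesis
  proof cases
    case 1
    then obtain s where "det u * s^2 + det_polar x u * s + det x = 0"
      by (rule quadratic_has_root[OF alg])
    then show ?thesis by (intro that[of s 0]) (simp add: det_add_msmult algebra_simps)
  next
    case 2
    then obtain s where "0 * s^2 + det_polar u v * s + (det x + det_polar x v + det v) = 0"
      using quadratic_has_root[OF alg, of 0 "det_polar u v"] 2(3) by blast
    then show ?thesis
      using 2 by (intro that[of s 1]) (simp only: det_add_msmult_msmult, simp add: algebra_simps)
  next
    case 3
    then obtain t where "det v * t^2 + det_polar x v * t + det x = 0"
      by (rule quadratic_has_root[OF alg])
    then show ?thesis by (intro that[of 0 t]) (simp add: det_add_msmult algebra_simps)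
  qed
qed

lemma dim_le_dim_trace_zero_part:
  assumes M: "M2.subspace M" and x: "x \<in> M" "trace x = 1"
  shows "M2.dim M \<le> M2.dim {v \<in> M. trace v = 0} + 1"
proof -
  let ?V = "{v \<in> M. trace v = 0}"
  have "M \<subseteq> M2.span (insert x ?V)"
  proof
    fix w assume w: "w \<in> M"
    have "w - msmult (trace w) x \<in> ?V"
      using w x M by (simp add: M2.subspace_diff M2.subspace_scale trace_sub)
    then have "msmult (trace w) x + (w - msmult (trace w) x) \<in> M2.span (insert x ?V)"
      by (intro M2.span_add M2.span_scale M2.span_base) auto
    then show "w \<in> M2.span (insert x ?V)" by simp
  qed
  then have "M2.dim M \<le> M2.dim (insert x ?V)" by (rule M2.dim_mono)
  also have "\<dots> \<le> M2.dim ?V + 1" by (simp add: M2.dim_insert)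
  finally show ?thesis .
qed

lemma trace_zero_subset_span_char2:
  assumes c2: "(2::'a::field) = 0"
  shows "{v :: 'a^2^2. trace v = 0} \<subseteq> M2.span {mat 1, unit_mat 1 2, unit_mat 2 1}"
proof
  fix v :: "'a^2^2" assume "v \<in> {v. trace v = 0}"
  moreover obtain a b c d where v: "v = mat2 a b c d" by (rule mat2_cases)
  ultimately have "d = a" using char2_trace_zero[OF c2] by simp
  then have "v = msmult a (mat 1) + msmult b (unit_mat 1 2) + msmult c (unit_mat 2 1)"
    by (simp add: v unit_mat_mat2 mat1_eq_mat2)
  also have "\<dots> \<in> M2.span {mat 1, unit_mat 1 2, unit_mat 2 1}"
    by (intro M2.span_add M2.span_scale M2.span_base) auto
  finally show "v \<in> M2.span {mat 1, unit_mat 1 2, unit_mat 2 1}" .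
qed

lemma dim_idempotent_free_le_2:
  fixes M :: "('a::field^2^2) set"
  assumes c2: "(2::'a) = 0" and alg: "\<forall>p :: 'a poly. degree p \<ge> 1 \<longrightarrow> (\<exists>x. poly p x = 0)"
    and M: "M2.subspace M" and free: "idempotent_free M"
  shows "M2.dim M \<le> 2"
proof (cases "M \<subseteq> {v. trace v = 0}")
  case True
  have "insert (mat 1) M \<subseteq> M2.span {mat 1, unit_mat 1 2, unit_mat 2 1}"
    using True trace_mat1_char2[OF c2] trace_zero_subset_span_char2[OF c2] by blast
  then have "M2.dim (insert (mat 1) M) \<le> card {mat 1, unit_mat 1 2, unit_mat 2 1 :: 'a^2^2}"
    by (rule M2.dim_le_card) simp
  also have "\<dots> \<le> 3" by (simp add: card_insert_if)
  finally have "M2.dim (insert (mat 1) M) \<le> 3" .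
  moreover have "mat 1 \<notin> M2.span M"
    using idempotent_free_mat1_notin[OF free] M by (metis M2.span_eq_iff)
  ultimately show ?thesis by (simp add: M2.dim_insert)
next
  case False
  then obtain y where y: "y \<in> M" "trace y \<noteq> 0" by blast
  define x where "x = msmult (1 / trace y) y"
  have x: "x \<in> M" "trace x = 1" using y M by (simp_all add: x_def M2.subspace_scale)
  let ?V = "{v \<in> M. trace v = 0}"
  have "M2.dim ?V \<le> 1"
  proof (rule ccontr)
    assume "\<not> M2.dim ?V \<le> 1"
    moreover obtain B where B: "B \<subseteq> ?V" "M2.independent B" "card B = M2.dim ?V"
      by (rule M2.basis_exists)
    moreover have "finite B" using B(2) by (rule M2.finiteI_independent)
    ultimately obtain u v where uv: "u \<in> B" "v \<in> B" "u \<noteq> v"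
      using card_le_Suc0_iff_eq[of B] by auto
    then have ind: "M2.independent {u, v}" using M2.independent_mono[OF B(2)] by auto
    then have "u \<noteq> 0" using M2.dependent_zero by blast
    moreover have "v \<noteq> msmult k u" for k
    proof
      assume "v = msmult k u"
      then have "v \<in> M2.span {u}" by (simp add: M2.span_scale M2.span_base)
      with ind uv(3) show False using M2.independent_insert[of v "{u}"] by (auto simp: insert_commute)
    qed
    moreover have "trace u = 0" "trace v = 0" using uv B(1) by auto
    ultimately obtain s t where "det (x + msmult s u + msmult t v) = 0"
      using det_vanishes_on_trace_zero_plane[OF c2 alg] by metis
    moreover have "x + msmult s u + msmult t v \<in> M"
      using M x uv B(1) by (intro M2.subspace_add M2.subspace_scale) auto
    moreover have "trace (x + msmult s u + msmult t v) = 1"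
      using x \<open>trace u = 0\<close> \<open>trace v = 0\<close> by (simp add: trace_add)
    ultimately show False using free by (auto simp: idempotent_free_iff)
  qed
  with dim_le_dim_trace_zero_part[OF M x] show ?thesis by simp
qed

section \<open>Maximal idempotent-free subspaces are planes\<close>

lemma exists_isotropic_trace_zero_polar_zero:
  fixes x :: "'a::field^2^2"
  assumes c2: "(2::'a) = 0" and alg: "\<forall>p :: 'a poly. degree p \<ge> 1 \<longrightarrow> (\<exists>x. poly p x = 0)"
    and "trace x \<noteq> 0"
  obtains v where "v \<noteq> 0" "trace v = 0" "det v = 0" "det_polar x v = 0"
proof -
  obtain x1 x2 x3 x4 where x: "x = mat2 x1 x2 x3 x4" by (rule mat2_cases)
  obtain s where s: "x3 * s^2 + trace x * s + x2 = 0"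
    using quadratic_has_root[OF alg, of x3 "trace x" x2] \<open>trace x \<noteq> 0\<close> by blast
  have "det_polar x (mat2 s (s^2) 1 s) = trace x * (s + s) - (x3 * s^2 + trace x * s + x2)"
    by (simp add: det_polar_def x algebra_simps power2_eq_square)
  also have "\<dots> = 0" using s char2_add_self[OF c2, of s] by simp
  finally show ?thesis using char2_add_self[OF c2, of s]
    by (intro that[of "mat2 s (s^2) 1 s"]) (simp_all add: zero_eq_mat2 power2_eq_square)
qed

lemma extend_trace_zero_line:
  fixes u :: "'a::field^2^2"
  assumes c2: "(2::'a) = 0" and "u \<noteq> 0" "trace u = 0" and I: "mat 1 \<notin> M2.span {u}"
  obtains v where "v \<notin> M2.span {u}" "idempotent_free (M2.span {u, v})"
proof -
  obtain a b c d where u: "u = mat2 a b c d" by (rule mat2_cases)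
  have d: "d = a" using \<open>trace u = 0\<close> char2_trace_zero[OF c2] by (simp add: u)
  have bc: "b \<noteq> 0 \<or> c \<noteq> 0"
  proof (rule ccontr)
    assume "\<not> (b \<noteq> 0 \<or> c \<noteq> 0)"
    then have "mat 1 = msmult (1 / a) u" using \<open>u \<noteq> 0\<close> by (auto simp: u d mat1_eq_mat2 zero_eq_mat2)
    with I show False by (simp add: M2.span_scale M2.span_base)
  qed
  define v where "v = (if b \<noteq> 0 then mat2 0 0 1 0 else mat2 0 1 0 (0::'a))"
  show ?thesis
  proof (rule that)
    show "v \<notin> M2.span {u}"
      using bc by (auto simp: M2.span_singleton u v_def)
    have "M2.span {u, v} \<subseteq> {v. trace v = 0}"
      using \<open>trace u = 0\<close> by (auto simp: span_pair v_def trace_add)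
    moreover have "mat 1 \<notin> M2.span {u, v}"
      using bc by (auto simp: span_pair u d v_def mat1_eq_mat2)
    ultimately show "idempotent_free (M2.span {u, v})" by (rule idempotent_free_trace_zero)
  qed
qed

lemma extend_idempotent_free_line:
  fixes u :: "'a::field^2^2"
  assumes c2: "(2::'a) = 0" and alg: "\<forall>p :: 'a poly. degree p \<ge> 1 \<longrightarrow> (\<exists>x. poly p x = 0)"
    and "u \<noteq> 0" and free: "idempotent_free (M2.span {u})"
  obtains v where "v \<notin> M2.span {u}" "idempotent_free (M2.span {u, v})"
proof (cases "trace u = 0")
  case True
  with idempotent_free_mat1_notin[OF free] show ?thesis
    using extend_trace_zero_line[OF c2 \<open>u \<noteq> 0\<close>] that by blast
next
  case False
  have "det u \<noteq> 0"
  proof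
    assume "det u = 0"
    have "msmult (1 / trace u) u \<in> M2.span {u}" by (simp add: M2.span_scale M2.span_base)
    moreover have "trace (msmult (1 / trace u) u) = 1" using False by simp
    ultimately show False using free \<open>det u = 0\<close> by (auto simp: idempotent_free_iff)
  qed
  obtain v where v: "v \<noteq> 0" "trace v = 0" "det v = 0" "det_polar u v = 0"
    using exists_isotropic_trace_zero_polar_zero[OF c2 alg False] by blast
  show ?thesis
  proof (rule that)
    show "v \<notin> M2.span {u}" using v False by (auto simp: M2.span_singleton)
    show "idempotent_free (M2.span {u, v})"
    proof (rule idempotent_free_if_trace_det_proportional[OF c2 False \<open>det u \<noteq> 0\<close>])
      fix z assume "z \<in> M2.span {u, v}"
      then obtain a b where "z = msmult a u + msmult b v" by (auto simp: span_pair)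
      with v show "\<exists>c. trace z = c * trace u \<and> det z = c^2 * det u"
        by (intro exI[of _ a]) (simp add: trace_add det_msmult_add_msmult)
    qed
  qed
qed

text \<open>A subspace of dimension at most one lies on a line \<open>Fu\<close> that is still idempotent-free;
  for \<open>M = 0\<close> take a nilpotent \<open>u\<close>.\<close>
lemma idempotent_free_dim_le_1_not_maximal:
  fixes M :: "('a::field^2^2) set"
  assumes c2: "(2::'a) = 0" and alg: "\<forall>p :: 'a poly. degree p \<ge> 1 \<longrightarrow> (\<exists>x. poly p x = 0)"
    and M: "M2.subspace M" and free: "idempotent_free M" and "M2.dim M \<le> 1"
  obtains M' where "M2.subspace M'" "idempotent_free M'" "M \<subseteq> M'" "M' \<noteq> M"
proof -
  obtain u where u: "u \<noteq> 0" "M \<subseteq> M2.span {u}" "idempotent_free (M2.span {u})"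
  proof (cases "M2.dim M = 0")
    case True
    let ?u = "unit_mat 1 2 :: 'a^2^2"
    have "idempotent_free (M2.span {?u})"
      by (rule idempotent_free_trace_zero)
        (auto simp: M2.span_singleton unit_mat_mat2 mat1_eq_mat2)
    moreover have "M \<subseteq> M2.span {?u}" using True M2.span_zero by auto
    ultimately show ?thesis by (intro that[of ?u]) (auto simp: unit_mat_mat2 zero_eq_mat2)
  next
    case False
    obtain B where B: "B \<subseteq> M" "M2.independent B" "M \<subseteq> M2.span B" "card B = M2.dim M"
      by (rule M2.basis_exists)
    have "card B = 1" using B(4) False \<open>M2.dim M \<le> 1\<close> by linarith
    then obtain u where "B = {u}" by (rule card_1_singletonE)
    with B M have "M = M2.span {u}" "u \<noteq> 0"
      using M2.span_minimal[of "{u}" M] M2.dependent_zero by auto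
    with free show ?thesis by (intro that[of u]) auto
  qed
  obtain v where "v \<notin> M2.span {u}" "idempotent_free (M2.span {u, v})"
    by (rule extend_idempotent_free_line[OF c2 alg u(1,3)])
  moreover have "M \<subseteq> M2.span {u, v}" using u(2) M2.span_mono[of "{u}" "{u, v}"] by blast
  moreover have "v \<in> M2.span {u, v}" by (simp add: M2.span_base)
  ultimately show ?thesis using u(2) M2.subspace_span by (intro that[of "M2.span {u, v}"]) auto
qed

lemma maximal_Mathieu_subspace_iff_dim_2:
  fixes M :: "('a::field^2^2) set"
  assumes c2: "(2::'a) = 0" and alg: "\<forall>p :: 'a poly. degree p \<ge> 1 \<longrightarrow> (\<exists>x. poly p x = 0)"
  shows "maximal_Mathieu_subspace M \<longleftrightarrow> M2.subspace M \<and> idempotent_free M \<and> M2.dim M = 2"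
  unfolding maximal_Mathieu_subspace_iff_maximal_idempotent_free
proof (intro iffI)
  assume "M2.subspace M \<and> idempotent_free M \<and>
    (\<forall>M'. M2.subspace M' \<and> idempotent_free M' \<and> M \<subseteq> M' \<longrightarrow> M' = M)"
  then have M: "M2.subspace M" and free: "idempotent_free M"
    and maximal: "\<And>M'. M2.subspace M' \<Longrightarrow> idempotent_free M' \<Longrightarrow> M \<subseteq> M' \<Longrightarrow> M' = M"
    by auto
  have "\<not> M2.dim M \<le> 1"
  proof
    assume "M2.dim M \<le> 1"
    then obtain M' where "M2.subspace M'" "idempotent_free M'" "M \<subseteq> M'" "M' \<noteq> M"
      by (rule idempotent_free_dim_le_1_not_maximal[OF c2 alg M free])
    with maximal show False by blast
  qed
  with dim_idempotent_free_le_2[OF c2 alg M free] M free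
  show "M2.subspace M \<and> idempotent_free M \<and> M2.dim M = 2" by simp
next
  assume "M2.subspace M \<and> idempotent_free M \<and> M2.dim M = 2"
  then show "M2.subspace M \<and> idempotent_free M \<and>
    (\<forall>M'. M2.subspace M' \<and> idempotent_free M' \<and> M \<subseteq> M' \<longrightarrow> M' = M)"
    using dim_idempotent_free_le_2[OF c2 alg] M2.subspace_dim_equal by (metis order.refl)
qed

section \<open>The subspaces \<open>Fw + e\<^sub>1 M\<^sub>2(F) e\<^sub>2\<close>\<close>

definition complementary_idempotents :: "'a::field^2^2 \<Rightarrow> 'a^2^2 \<Rightarrow> bool" where
  "complementary_idempotents e1 e2 \<longleftrightarrow>
     e1 ** e1 = e1 \<and> e2 ** e2 = e2 \<and> e1 \<noteq> 0 \<and> e2 \<noteq> 0 \<and> e1 + e2 = mat 1"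

lemma complementary_idempotents_sym:
  "complementary_idempotents e1 e2 \<Longrightarrow> complementary_idempotents e2 e1"
  by (auto simp: complementary_idempotents_def add.commute)

lemma complementary_idempotents_eq_diff:
  "complementary_idempotents e1 e2 \<Longrightarrow> e2 = mat 1 - e1"
  unfolding complementary_idempotents_def by (metis add_diff_cancel_left')

lemma complementary_idempotentsD:
  assumes "complementary_idempotents e1 e2"
  shows "trace e1 = 1" "det e1 = 0" "e1 ** e2 = 0"
proof -
  from assms have e1: "e1 ** e1 = e1" "e1 \<noteq> 0" and "e2 \<noteq> 0"
    by (simp_all add: complementary_idempotents_def)
  have e2: "e2 = mat 1 - e1" using assms by (rule complementary_idempotents_eq_diff)
  with \<open>e2 \<noteq> 0\<close> have "e1 \<noteq> mat 1" by auto
  then show "trace e1 = 1" "det e1 = 0" using idempotent_cases[OF e1(1)] e1(2) by auto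
  show "e1 ** e2 = 0" using e1 by (simp add: e2 matrix_diff_ldistrib)
qed

definition line_plus_corner :: "'a::field^2^2 \<Rightarrow> 'a^2^2 \<Rightarrow> 'a^2^2 \<Rightarrow> ('a^2^2) set" where
  "line_plus_corner w e1 e2 = {msmult c w + e1 ** y ** e2 | c y. True}"

lemma subspace_line_plus_corner: "M2.subspace (line_plus_corner w e1 e2)"
  unfolding M2.subspace_def line_plus_corner_def
proof (intro conjI ballI allI)
  show "0 \<in> {msmult c w + e1 ** y ** e2 | c y. True}"
    by (rule CollectI, rule exI[of _ 0], rule exI[of _ 0]) simp
next
  fix z z'
  assume "z \<in> {msmult c w + e1 ** y ** e2 | c y. True}" "z' \<in> {msmult c w + e1 ** y ** e2 | c y. True}"
  then obtain c y c' y' where "z = msmult c w + e1 ** y ** e2" "z' = msmult c' w + e1 ** y' ** e2"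
    by blast
  then have "z + z' = msmult (c + c') w + e1 ** (y + y') ** e2"
    by (simp add: msmult_add_left matrix_add_ldistrib matrix_add_rdistrib algebra_simps)
  then show "z + z' \<in> {msmult c w + e1 ** y ** e2 | c y. True}" by blast
next
  fix k z assume "z \<in> {msmult c w + e1 ** y ** e2 | c y. True}"
  then obtain c y where "z = msmult c w + e1 ** y ** e2" by blast
  then have "msmult k z = msmult (k * c) w + e1 ** msmult k y ** e2"
    by (simp add: msmult_add_right msmult_msmult matrix_mult_msmult_left matrix_mult_msmult_right)
  then show "msmult k z \<in> {msmult c w + e1 ** y ** e2 | c y. True}" by blast
qed

lemma corner_trace_det:
  assumes "complementary_idempotents e1 e2"
  shows "trace (e1 ** y ** e2) = 0" "det (e1 ** y ** e2) = 0"
proof -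
  have "trace (e1 ** y ** e2) = trace (e2 ** (e1 ** y))" by (rule trace_mul_sym)
  also have "\<dots> = trace ((e2 ** e1) ** y)" by (simp only: matrix_mul_assoc)
  finally show "trace (e1 ** y ** e2) = 0"
    using complementary_idempotentsD(3)[OF complementary_idempotents_sym[OF assms]] by simp
  show "det (e1 ** y ** e2) = 0"
    using complementary_idempotentsD(2)[OF assms] by (simp add: det_mul)
qed

lemma idempotent_free_line_plus_corner:
  fixes l1 l2 :: "'a::field"
  assumes c2: "(2::'a) = 0" and e: "complementary_idempotents e1 e2"
    and "l1 \<noteq> 0" "l2 \<noteq> 0" "l1 + l2 \<noteq> 0"
  shows "idempotent_free (line_plus_corner (msmult l1 e1 + msmult l2 e2) e1 e2)"
proof -
  let ?w = "msmult l1 e1 + msmult l2 e2"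
  note e1 = complementary_idempotentsD[OF e]
  note e2 = complementary_idempotentsD[OF complementary_idempotents_sym[OF e]]
  have e1_idem: "e1 ** e1 = e1" using e by (simp add: complementary_idempotents_def)
  have det_w: "det ?w = l1 * l2"
    by (simp add: det_msmult_add_msmult e1 e2 det_polar_def power2_eq_square)
  have polar: "det_polar ?w (e1 ** y ** e2) = 0" for y
  proof -
    have "?w ** (e1 ** y ** e2) = msmult l1 ((e1 ** e1) ** y ** e2) + msmult l2 ((e2 ** e1) ** y ** e2)"
      by (simp add: matrix_add_rdistrib matrix_mult_msmult_left matrix_mul_assoc)
    then have "?w ** (e1 ** y ** e2) = msmult l1 (e1 ** y ** e2)" by (simp add: e1_idem e2)
    then show ?thesis by (simp add: det_polar_def corner_trace_det[OF e])
  qed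
  show ?thesis
  proof (rule idempotent_free_if_trace_det_proportional[OF c2 \<open>l1 + l2 \<noteq> 0\<close>])
    show "l1 * l2 \<noteq> 0" using \<open>l1 \<noteq> 0\<close> \<open>l2 \<noteq> 0\<close> by simp
    fix z assume "z \<in> line_plus_corner ?w e1 e2"
    then obtain c y where z: "z = msmult c ?w + e1 ** y ** e2" by (auto simp: line_plus_corner_def)
    have "det z = c^2 * (l1 * l2)"
      using det_msmult_add_msmult[of c ?w 1 "e1 ** y ** e2"]
      by (simp add: z det_w polar corner_trace_det[OF e])
    moreover have "trace z = c * (l1 + l2)"
      by (simp add: z trace_add e1 e2 corner_trace_det[OF e] algebra_simps)
    ultimately show "\<exists>c. trace z = c * (l1 + l2) \<and> det z = c^2 * (l1 * l2)" by blast
  qed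
qed

lemma dim_line_plus_corner:
  assumes e: "complementary_idempotents e1 e2" and "trace w \<noteq> 0"
  shows "2 \<le> M2.dim (line_plus_corner w e1 e2)"
proof -
  obtain i k where "e1$i$k \<noteq> 0" using e by (auto simp: complementary_idempotents_def vec_eq_iff)
  moreover obtain l j where "e2$l$j \<noteq> 0" using e by (auto simp: complementary_idempotents_def vec_eq_iff)
  ultimately have "(e1 ** unit_mat k l ** e2)$i$j \<noteq> 0" by (simp add: sandwich_unit_mat_nth)
  then have p: "e1 ** unit_mat k l ** e2 \<noteq> 0" by auto
  let ?p = "e1 ** unit_mat k l ** e2"
  have in_M: "w \<in> line_plus_corner w e1 e2" "?p \<in> line_plus_corner w e1 e2"
    unfolding line_plus_corner_def
    by (rule CollectI, rule exI[of _ 1], rule exI[of _ 0], simp)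
      (rule CollectI, rule exI[of _ 0], rule exI[of _ "unit_mat k l"], simp)
  have "w \<notin> M2.span {?p}"
    using \<open>trace w \<noteq> 0\<close> corner_trace_det(1)[OF e] by (auto simp: M2.span_singleton)
  then have "M2.independent {w, ?p}" using p by (simp add: M2.independent_insert)
  moreover have "w \<noteq> ?p" using \<open>trace w \<noteq> 0\<close> corner_trace_det(1)[OF e] by auto
  ultimately show ?thesis
    using M2.independent_card_le_dim[of "{w, ?p}" "line_plus_corner w e1 e2"] in_M by simp
qed

section \<open>Idempotent-free planes not contained in \<open>sl\<^sub>2\<close>\<close>

lemma char2_eigenvalues:
  fixes \<delta> :: "'a::field"
  assumes c2: "(2::'a) = 0" and alg: "\<forall>p :: 'a poly. degree p \<ge> 1 \<longrightarrow> (\<exists>x. poly p x = 0)"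
  obtains l1 l2 where "l1 \<noteq> l2" "l1 + l2 = 1" "l1 * l2 = \<delta>"
proof -
  obtain l where l: "1 * l^2 + 1 * l + \<delta> = 0"
    by (rule quadratic_has_root[OF alg, of 1 1 \<delta>]) simp
  show ?thesis
  proof (rule that[of l "l + 1"])
    show "l + (l + 1) = 1" using char2_add_self[OF c2, of l] by (simp add: add.assoc[symmetric])
    have "l * (l + 1) = - \<delta>" using l by (simp add: power2_eq_square algebra_simps eq_neg_iff_add_eq_0)
    then show "l * (l + 1) = \<delta>" using char2_uminus[OF c2] by simp
  qed simp
qed

lemma det_sub_scalar: "det (x - msmult s (mat 1)) = det x - s * trace x + s^2"
  by (cases x rule: mat2_cases) (simp add: mat1_eq_mat2 power2_eq_square algebra_simps)

lemma spectral_decomposition: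
  fixes x :: "'a::field^2^2"
  assumes "l1 \<noteq> l2" and tr: "trace x = l1 + l2" and det: "det x = l1 * l2"
  obtains e1 e2 where "complementary_idempotents e1 e2" "x = msmult l1 e1 + msmult l2 e2"
proof -
  have ne: "l1 - l2 \<noteq> 0" using \<open>l1 \<noteq> l2\<close> by simp
  define e1 where "e1 = msmult (1 / (l1 - l2)) (x - msmult l2 (mat 1))"
  define e2 where "e2 = mat 1 - e1"
  have "trace (x - msmult l2 (mat 1)) = l1 - l2"
    by (simp add: trace_sub tr trace_I mult_2_right)
  moreover have "det (x - msmult l2 (mat 1)) = 0"
    by (simp add: det_sub_scalar tr det power2_eq_square algebra_simps)
  ultimately have "trace e1 = 1" "det e1 = 0" using ne by (simp_all add: e1_def)
  then have e1: "e1 ** e1 = e1" "e1 \<noteq> 0" by (auto simp: idempotent_if_trace_det)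
  have "e2 ** e2 = e2" by (simp add: e2_def matrix_diff_ldistrib matrix_diff_rdistrib e1)
  moreover have "e2 \<noteq> 0"
  proof
    assume "e2 = 0"
    then have "e1 = mat2 1 0 0 1" by (simp add: e2_def mat1_eq_mat2)
    then have "(1::'a) + 1 = 1" using \<open>trace e1 = 1\<close> by (simp only: trace_mat2)
    then show False by (metis add_cancel_right_right one_neq_zero)
  qed
  moreover have "x = msmult l1 e1 + msmult l2 e2"
  proof -
    have "x = msmult (l1 - l2) e1 + msmult l2 (mat 1)"
      using ne by (simp add: e1_def msmult_msmult)
    then show ?thesis
      by (cases e1 rule: mat2_cases) (simp add: e2_def mat1_eq_mat2 algebra_simps)
  qed
  moreover have "e1 + e2 = mat 1" by (simp add: e2_def)
  ultimately show ?thesis using e1 by (intro that) (simp_all add: complementary_idempotents_def)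
qed

lemma rank_one_entry_identity:
  assumes "det (e::'a::field^2^2) = 0"
  shows "(e ** n)$i$j * (n ** e)$k$l = e$i$l * (n ** e ** n)$k$j"
proof -
  obtain a b c d where e: "e = mat2 a b c d" by (rule mat2_cases)
  obtain p q r s where n: "n = mat2 p q r s" by (rule mat2_cases)
  have h: "a * d - b * c = 0" using assms by (simp add: e)
  have "\<forall>i j k l. (e ** n)$i$j * (n ** e)$k$l = e$i$l * (n ** e ** n)$k$j"
    unfolding forall_2 e n mat2_mult mat2_nth by (intro conjI; use h in algebra)
  then show ?thesis by blast
qed

lemma rank_one_sandwich_zero:
  assumes "det (e::'a::field^2^2) = 0" and "n ** e ** n = 0"
  shows "e ** n = 0 \<or> n ** e = 0"
proof (rule ccontr)
  assume "\<not> (e ** n = 0 \<or> n ** e = 0)"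
  then obtain i j k l where "(e ** n)$i$j \<noteq> 0" "(n ** e)$k$l \<noteq> 0" by (auto simp: vec_eq_iff)
  with rank_one_entry_identity[OF assms(1), of n i j k l] assms(2) show False by simp
qed

lemma trace_zero_nilpotent_in_corner:
  assumes e: "complementary_idempotents e1 e2"
    and n: "trace n = 0" "det n = 0" and "trace (e1 ** n) = 0"
  shows "e1 ** n ** e2 = n \<or> e2 ** n ** e1 = n"
proof -
  note e1 = complementary_idempotentsD[OF e]
  note e2 = complementary_idempotentsD[OF complementary_idempotents_sym[OF e]]
  have sum: "e1 + e2 = mat 1" using e by (simp add: complementary_idempotents_def)
  have "trace (e2 ** n) = 0"
    using \<open>trace (e1 ** n) = 0\<close> n
    by (simp add: complementary_idempotents_eq_diff[OF e] matrix_diff_rdistrib trace_sub)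
  then have "e1 ** n ** e1 = 0" "e2 ** n ** e2 = 0"
    using matrix_sandwich_eq[of e1 n] matrix_sandwich_eq[of e2 n] \<open>trace (e1 ** n) = 0\<close> e1 e2
    by simp_all
  moreover have "n = (e1 + e2) ** n ** (e1 + e2)" by (simp add: sum)
  ultimately have decomp: "n = e1 ** n ** e2 + e2 ** n ** e1"
    by (simp add: matrix_add_ldistrib matrix_add_rdistrib add_ac)
  have "n ** e1 ** n = 0"
    using matrix_sandwich_eq[of n e1] \<open>trace (e1 ** n) = 0\<close> n by (simp add: trace_mul_sym[of n])
  then consider "e1 ** n = 0" | "n ** e1 = 0" using rank_one_sandwich_zero e1(2) by blast
  then show ?thesis
  proof cases
    case 1
    then show ?thesis using decomp by simp
  next
    case 2
    then show ?thesis using decomp by (simp add: matrix_mul_assoc[symmetric])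
  qed
qed

lemma corner_entries_proportional:
  fixes e1 e2 y z :: "'a::field^2^2"
  assumes "det e1 = 0" "det e2 = 0"
  shows "(e1 ** y ** e2)$i$j * (e1 ** z ** e2)$k$l = (e1 ** y ** e2)$k$l * (e1 ** z ** e2)$i$j"
proof -
  obtain a b c d where e: "e1 = mat2 a b c d" by (rule mat2_cases)
  obtain a' b' c' d' where f: "e2 = mat2 a' b' c' d'" by (rule mat2_cases)
  obtain p q r s where y: "y = mat2 p q r s" by (rule mat2_cases)
  obtain p' q' r' s' where z: "z = mat2 p' q' r' s'" by (rule mat2_cases)
  have h1: "a * d - b * c = 0" and h2: "a' * d' - b' * c' = 0" using assms by (simp_all add: e f)
  have "\<forall>i j k l. (e1 ** y ** e2)$i$j * (e1 ** z ** e2)$k$l = (e1 ** y ** e2)$k$l * (e1 ** z ** e2)$i$j"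
    unfolding forall_2 e f y z mat2_mult mat2_nth by (intro conjI; (rule refl | use h1 h2 in algebra))
  then show ?thesis by blast
qed

lemma span_eq_line_plus_corner:
  assumes "n \<noteq> 0" and n: "e1 ** n ** e2 = n" and "det (e1::'a::field^2^2) = 0" "det e2 = 0"
  shows "M2.span {x, n} = line_plus_corner x e1 e2"
  unfolding span_pair line_plus_corner_def
proof (intro set_eqI iffI)
  fix z assume "z \<in> {msmult a x + msmult b n | a b. True}"
  then obtain a b where "z = msmult a x + msmult b n" by blast
  then have "z = msmult a x + e1 ** msmult b n ** e2"
    using n by (simp add: matrix_mult_msmult_left matrix_mult_msmult_right)
  then show "z \<in> {msmult c x + e1 ** y ** e2 | c y. True}" by blast
next
  fix z assume "z \<in> {msmult c x + e1 ** y ** e2 | c y. True}"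
  then obtain c y where z: "z = msmult c x + e1 ** y ** e2" by blast
  obtain k l where kl: "n$k$l \<noteq> 0" using \<open>n \<noteq> 0\<close> by (auto simp: vec_eq_iff)
  define r where "r = (e1 ** y ** e2)$k$l / n$k$l"
  have "e1 ** y ** e2 = msmult r n"
  proof (simp add: vec_eq_iff msmult_def, intro allI)
    fix i j
    have "(e1 ** y ** e2)$i$j * n$k$l = (e1 ** y ** e2)$k$l * n$i$j"
      using corner_entries_proportional[OF assms(3,4), of y i j n k l] by (simp only: n)
    then show "(e1 ** y ** e2)$i$j = r * n$i$j" using kl by (simp add: r_def field_simps)
  qed
  then show "z \<in> {msmult a x + msmult b n | a b. True}" using z by auto
qed

text \<open>Normalise a vector of trace one and pick a nonzero trace-zero \<open>n\<close>; since \<open>det\<close> has no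
  zero on the line \<open>x + Fn\<close> of trace-one elements, \<open>n\<close> is nilpotent and orthogonal to \<open>x\<close>.\<close>
lemma idempotent_free_plane_basis:
  fixes M :: "('a::field^2^2) set"
  assumes c2: "(2::'a) = 0" and alg: "\<forall>p :: 'a poly. degree p \<ge> 1 \<longrightarrow> (\<exists>x. poly p x = 0)"
    and M: "M2.subspace M" and free: "idempotent_free M" and dim: "M2.dim M = 2"
    and "\<not> M \<subseteq> {v. trace v = 0}"
  obtains x n where "M = M2.span {x, n}" "trace x = 1" "det x \<noteq> 0"
    "n \<noteq> 0" "trace n = 0" "det n = 0" "det_polar x n = 0"
proof -
  obtain y where y: "y \<in> M" "trace y \<noteq> 0" using \<open>\<not> M \<subseteq> {v. trace v = 0}\<close> by blast
  define x where "x = msmult (1 / trace y) y"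
  have x: "x \<in> M" "trace x = 1" using y M by (simp_all add: x_def M2.subspace_scale)
  have "M2.dim {v \<in> M. trace v = 0} \<noteq> 0"
    using dim_le_dim_trace_zero_part[OF M x] dim by linarith
  then obtain n where n: "n \<in> M" "trace n = 0" "n \<noteq> 0"
    unfolding M2.dim_eq_0 by blast
  have "x \<noteq> n" using x n by auto
  moreover have "x \<notin> M2.span {n}" using x n by (auto simp: M2.span_singleton)
  ultimately have "M2.independent {x, n}" using n by (simp add: M2.independent_insert)
  then have "M2.dim (M2.span {x, n}) = 2"
    using \<open>x \<noteq> n\<close> by (simp add: M2.dim_eq_card_independent)
  moreover have "M2.span {x, n} \<subseteq> M" using x n M by (intro M2.span_minimal) auto
  ultimately have span: "M = M2.span {x, n}"
    using M2.subspace_dim_equal[OF M2.subspace_span M] dim by (metis M2.dim_span order.refl)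
  have no_zero: "det (x + msmult s n) \<noteq> 0" for s
  proof -
    have "x + msmult s n \<in> M" using x n M by (simp add: M2.subspace_add M2.subspace_scale)
    moreover have "trace (x + msmult s n) = 1" using x n by (simp add: trace_add)
    ultimately show ?thesis using free by (simp add: idempotent_free_iff)
  qed
  have "det n = 0 \<and> det_polar x n = 0"
  proof (rule ccontr)
    assume "\<not> (det n = 0 \<and> det_polar x n = 0)"
    then obtain s where "det n * s^2 + det_polar x n * s + det x = 0"
      by (auto intro: quadratic_has_root[OF alg])
    with no_zero[of s] show False by (simp add: det_add_msmult algebra_simps)
  qed
  with span x n no_zero[of 0] show ?thesis by (intro that) auto
qed

lemma idempotent_free_plane_eq_line_plus_corner:
  fixes M :: "('a::field^2^2) set"
  assumes c2: "(2::'a) = 0" and alg: "\<forall>p :: 'a poly. degree p \<ge> 1 \<longrightarrow> (\<exists>x. poly p x = 0)"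
    and M: "M2.subspace M" and free: "idempotent_free M" and dim: "M2.dim M = 2"
    and not_sl2: "\<not> M \<subseteq> {v. trace v = 0}"
  obtains e1 e2 l1 l2 where "complementary_idempotents e1 e2"
    "l1 \<noteq> l2" "l1 \<noteq> 0" "l2 \<noteq> 0" "l1 + l2 \<noteq> 0"
    "M = line_plus_corner (msmult l1 e1 + msmult l2 e2) e1 e2"
proof -
  obtain x n where span: "M = M2.span {x, n}" and x: "trace x = 1" "det x \<noteq> 0"
    and n: "n \<noteq> 0" "trace n = 0" "det n = 0" "det_polar x n = 0"
    by (rule idempotent_free_plane_basis[OF c2 alg M free dim not_sl2])
  obtain l1 l2 where l: "l1 \<noteq> l2" "l1 + l2 = 1" "l1 * l2 = det x"
    by (rule char2_eigenvalues[OF c2 alg])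
  have l0: "l1 \<noteq> 0" "l2 \<noteq> 0" using l(3) x(2) by auto
  obtain e1 e2 where e: "complementary_idempotents e1 e2" and x_eq: "x = msmult l1 e1 + msmult l2 e2"
    using spectral_decomposition[OF l(1)] x l by metis
  have "trace (e1 ** n) = 0"
  proof -
    have "trace (x ** n) = 0" using x n by (simp add: det_polar_def)
    moreover have "trace (x ** n) = (l1 - l2) * trace (e1 ** n)"
      using n by (simp add: x_eq complementary_idempotents_eq_diff[OF e] matrix_add_rdistrib
          matrix_diff_rdistrib matrix_mult_msmult_left trace_add trace_sub algebra_simps)
    ultimately show ?thesis using l(1) by simp
  qed
  note e_det = complementary_idempotentsD(2)[OF e]
    complementary_idempotentsD(2)[OF complementary_idempotents_sym[OF e]]
  consider "e1 ** n ** e2 = n" | "e2 ** n ** e1 = n"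
    using trace_zero_nilpotent_in_corner[OF e n(2,3) \<open>trace (e1 ** n) = 0\<close>] by blast
  then show ?thesis
  proof cases
    case 1
    then have "M = line_plus_corner x e1 e2" using span_eq_line_plus_corner[OF n(1)] e_det span by blast
    with that[OF e l(1) l0] x_eq l(2) show ?thesis by simp
  next
    case 2
    then have "M = line_plus_corner x e2 e1" using span_eq_line_plus_corner[OF n(1)] e_det span by blast
    with that[OF complementary_idempotents_sym[OF e] l(1)[symmetric] l0(2,1)] x_eq l(2)
    show ?thesis by (simp add: add.commute)
  qed
qed

lemma maximal_Mathieu_subspace_line_plus_corner:
  fixes l1 l2 :: "'a::field"
  assumes c2: "(2::'a) = 0" and alg: "\<forall>p :: 'a poly. degree p \<ge> 1 \<longrightarrow> (\<exists>x. poly p x = 0)"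
    and e: "complementary_idempotents e1 e2" and "l1 \<noteq> 0" "l2 \<noteq> 0" "l1 + l2 \<noteq> 0"
  shows "maximal_Mathieu_subspace (line_plus_corner (msmult l1 e1 + msmult l2 e2) e1 e2)"
proof -
  let ?M = "line_plus_corner (msmult l1 e1 + msmult l2 e2) e1 e2"
  have M: "M2.subspace ?M" by (rule subspace_line_plus_corner)
  moreover have free: "idempotent_free ?M"
    using idempotent_free_line_plus_corner[OF c2 e] assms by blast
  moreover have "trace (msmult l1 e1 + msmult l2 e2) \<noteq> 0"
    using complementary_idempotentsD(1)[OF e]
      complementary_idempotentsD(1)[OF complementary_idempotents_sym[OF e]] \<open>l1 + l2 \<noteq> 0\<close>
    by (simp add: trace_add)
  then have "2 \<le> M2.dim ?M" by (rule dim_line_plus_corner[OF e])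
  ultimately show ?thesis
    using dim_idempotent_free_le_2[OF c2 alg M free] maximal_Mathieu_subspace_iff_dim_2[OF c2 alg]
    by simp
qed

theorem theorem3p6:
  fixes M :: "(('a::field)^2^2) set"
  assumes alg_closed: "\<forall>p :: 'a poly. degree p \<ge> 1 \<longrightarrow> (\<exists>x. poly p x = 0)"
    and char2: "(2::'a) = 0"
  shows "maximal_Mathieu_subspace M \<longleftrightarrow>
    ((F_subspace M \<and> vector_space.dim msmult M = 2 \<and> M \<subseteq> {b. trace b = 0} \<and> mat 1 \<notin> M)
     \<or> (\<exists>e1 e2 l1 l2. idempotent_mat e1 \<and> idempotent_mat e2 \<and> e1 \<noteq> 0 \<and> e2 \<noteq> 0 \<and>
          e1 + e2 = mat 1 \<and> l1 \<noteq> l2 \<and> l1 \<noteq> 0 \<and> l2 \<noteq> 0 \<and> l1 + l2 \<noteq> 0 \<and>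
          M = {msmult c (msmult l1 e1 + msmult l2 e2) + e1 ** x ** e2 | c x. True}))"
  (is "_ \<longleftrightarrow> ?sl2_plane \<or> ?corner")
proof -
  note maximal_iff = maximal_Mathieu_subspace_iff_dim_2[OF char2 alg_closed]
  have corner_iff: "?corner \<longleftrightarrow> (\<exists>e1 e2 l1 l2. complementary_idempotents e1 e2 \<and>
      l1 \<noteq> l2 \<and> l1 \<noteq> 0 \<and> l2 \<noteq> 0 \<and> l1 + l2 \<noteq> 0 \<and>
      M = line_plus_corner (msmult l1 e1 + msmult l2 e2) e1 e2)"
    unfolding complementary_idempotents_def idempotent_mat_def line_plus_corner_def by blast
  show ?thesis
  proof
    assume "maximal_Mathieu_subspace M"
    then have M: "M2.subspace M" "idempotent_free M" "M2.dim M = 2" using maximal_iff by auto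
    show "?sl2_plane \<or> ?corner"
    proof (cases "M \<subseteq> {b. trace b = 0}")
      case True
      then show ?thesis using M idempotent_free_mat1_notin[OF M(2)] by (simp add: F_subspace_def)
    next
      case False
      with idempotent_free_plane_eq_line_plus_corner[OF char2 alg_closed M] show ?thesis
        unfolding corner_iff by metis
    qed
  next
    assume "?sl2_plane \<or> ?corner"
    then show "maximal_Mathieu_subspace M"
    proof
      assume ?sl2_plane
      then show ?thesis using idempotent_free_trace_zero[of M] maximal_iff by (simp add: F_subspace_def)
    next
      assume ?corner
      then show ?thesis unfolding corner_iff
        using maximal_Mathieu_subspace_line_plus_corner[OF char2 alg_closed] by blast
    qed
  qed
qed

end
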